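(* Let $\mathcal{C}$ be a category and let $\mathbf{Ff}_{\mathcal{C}}$ be the category of functorial factorisations on $\mathcal{C}$, equipped with the two strict monoidal structures $(\otimes, I)$ and $(\odot,\bot)$ described below. Then $(\mathbf{Ff}_{\mathcal{C}}, \otimes, I, \odot, \bot)$ can be made into a strict 2-fold monoidal category, i.e. there exist maps $m\colon \bot\otimes\bot\to\bot$, $c\colon I\to I\odot I$, $j\colon I\to \bot$ making $(\bot,j,m)$ a $\otimes$-monoid and $(I,j,c)$ a $\odot$-comonoid, and a family of maps $z_{A,B,C,D}\colon (A\odot B)\otimes(C\odot D)\to (A\otimes C)\odot(B\otimes D)$ natural in $A,B,C,D$, satisfying the coherence laws of a strict 2-fold monoidal category.
   Context: $\mathcal{C}^{\mathbf 2}$ denotes the arrow category of $\mathcal{C}$: objects are morphisms $f\colon X\to Y$ of $\mathcal{C}$; a morphism $(h,k)\colon f\to g$ (with $g\colon W\to Z$) is a pair $h\colon X\to W$, $k\colon Y\to Z$ with $gh=kf$. $\mathrm{dom},\mathrm{cod}\colon \mathcal{C}^{\mathbf 2}\to\mathcal{C}$ are the domain and codomain functors and $\kappa\colon\mathrm{dom}\Rightarrow\mathrm{cod}$ has $\kappa_f=f$. A functorial factorisation $(E,\lambda,\rho)$ is a functor $E\colon\mathcal{C}^{\mathbf 2}\to\mathcal{C}$ with natural transformations $\lambda\colon\mathrm{dom}\Rightarrow E$, $\rho\colon E\Rightarrow\mathrm{cod}$ such that $\rho_f\lambda_f=f$ for all $f$; so $f\colon X\to Y$ factors as $X\xrightarrow{\lambda_f}Ef\xrightarrow{\rho_f}Y$.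 A morphism $\alpha\colon(E,\lambda,\rho)\to(E',\lambda',\rho')$ in $\mathbf{Ff}_{\mathcal{C}}$ is a natural transformation $\alpha\colon E\Rightarrow E'$ with $\alpha\lambda=\lambda'$ and $\rho'\alpha=\rho$. The tensor $(E',\lambda',\rho')\otimes(E,\lambda,\rho)$ factorises $f$ as $X\xrightarrow{\lambda'_{\rho_f}\lambda_f}E'(\rho_f)\xrightarrow{\rho'_{\rho_f}}Y$; its unit $I=(\mathrm{dom},1_{\mathrm{dom}},\kappa)$ (the initial object of $\mathbf{Ff}_{\mathcal{C}}$). The tensor $(E',\lambda',\rho')\odot(E,\lambda,\rho)$ factorises $f$ as $X\xrightarrow{\lambda'_{\lambda_f}}E'(\lambda_f)\xrightarrow{\rho_f\rho'_{\lambda_f}}Y$; its unit is $\bot=(\mathrm{cod},\kappa,1_{\mathrm{cod}})$ (the terminal object). On morphisms $\alpha\colon(E,\lambda,\rho)\to(F,\mu,\nu)$, $\beta\colon(E',\lambda',\rho')\to(F',\mu',\nu')$: $(\beta\otimes\alpha)_f=\beta_{\nu_f}\circ E'(\alpha_f,1_Y)$ and $(\beta\odot\alpha)_f=\beta_{\mu_f}\circ E'(1_X,\alpha_f)$. A strict 2-fold monoidal category is a monoid in the category of strict monoidal categories and lax monoidal functors; explicitly it is a category with two strict monoidal structures and data $m,c,j,z$ as in the claim, subject to six coherence laws equating the two canonical composites $(A\odot B\odot C)\otimes(A'\odot B'\odot C')\to(A\otimes A')\odot(B\otimes B')\odot(C\otimes C')$, $(A\odot A')\otimes(B\odot B')\otimes(C\odot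 C')\to(A\otimes B\otimes C)\odot(A'\otimes B'\otimes C')$, $(A\odot B)\otimes I\to(A\otimes I)\odot(B\otimes I)$, $I\otimes(A\odot B)\to(I\otimes A)\odot(I\otimes B)$, $(\bot\odot A)\otimes(\bot\odot B)\to\bot\odot(A\otimes B)$, $(A\odot\bot)\otimes(B\odot\bot)\to(A\otimes B)\odot\bot$. *)

theory Defs
  imports Main
begin

record ('o, 'm) cat =
  cOb   :: "'o set"
  cAr   :: "'m set"
  cdom  :: "'m \<Rightarrow> 'o"
  ccod  :: "'m \<Rightarrow> 'o"
  cid   :: "'o \<Rightarrow> 'm"
  ccomp :: "'m \<Rightarrow> 'm \<Rightarrow> 'm"   (* ccomp C g f  =  g \<circ> f *)

definition chom :: "('o, 'm) cat \<Rightarrow> 'o \<Rightarrow> 'o \<Rightarrow> 'm set" where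
  "chom C a b = {f \<in> cAr C. cdom C f = a \<and> ccod C f = b}"

definition is_category :: "('o, 'm) cat \<Rightarrow> bool" where
  "is_category C \<longleftrightarrow>
     (\<forall>f \<in> cAr C. cdom C f \<in> cOb C \<and> ccod C f \<in> cOb C) \<and>
     (\<forall>a \<in> cOb C. cid C a \<in> chom C a a) \<and>
     (\<forall>f \<in> cAr C. \<forall>g \<in> cAr C. ccod C f = cdom C g \<longrightarrow>
        ccomp C g f \<in> chom C (cdom C f) (ccod C g)) \<and>
     (\<forall>f \<in> cAr C. ccomp C f (cid C (cdom C f)) = f \<and> ccomp C (cid C (ccod C f)) f = f) \<and>
     (\<forall>f \<in> cAr C. \<forall>g \<in> cAr C. \<forall>h \<in> cAr C.
        ccod C f = cdom C g \<longrightarrow> ccod C g = cdom C h \<longrightarrow>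
        ccomp C h (ccomp C g f) = ccomp C (ccomp C h g) f)"

text \<open>A morphism (h,k) : f \<rightarrow> g of the arrow category: a commutative square g h = k f.\<close>
definition is_sq :: "('o, 'm) cat \<Rightarrow> 'm \<Rightarrow> 'm \<Rightarrow> 'm \<Rightarrow> 'm \<Rightarrow> bool" where
  "is_sq C f g h k \<longleftrightarrow> f \<in> cAr C \<and> g \<in> cAr C \<and>
     h \<in> chom C (cdom C f) (cdom C g) \<and> k \<in> chom C (ccod C f) (ccod C g) \<and>
     ccomp C g h = ccomp C k f"

text \<open>fE F f = E f (object part), fEm F f g h k = E(h,k) : E f \<rightarrow> E g for (h,k) : f \<rightarrow> g,
  flam F f = lambda_f, frho F f = rho_f.\<close>
record ('o, 'm) ff =
  fE   :: "'m \<Rightarrow> 'o"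
  fEm  :: "'m \<Rightarrow> 'm \<Rightarrow> 'm \<Rightarrow> 'm \<Rightarrow> 'm"
  flam :: "'m \<Rightarrow> 'm"
  frho :: "'m \<Rightarrow> 'm"

definition is_ff :: "('o, 'm) cat \<Rightarrow> ('o, 'm) ff \<Rightarrow> bool" where
  "is_ff C F \<longleftrightarrow>
     (\<forall>f \<in> cAr C. fE F f \<in> cOb C \<and>
        flam F f \<in> chom C (cdom C f) (fE F f) \<and>
        frho F f \<in> chom C (fE F f) (ccod C f) \<and>
        ccomp C (frho F f) (flam F f) = f) \<and>
     (\<forall>f g h k. is_sq C f g h k \<longrightarrow>
        fEm F f g h k \<in> chom C (fE F f) (fE F g) \<and>
        ccomp C (fEm F f g h k) (flam F f) = ccomp C (flam F g) h \<and>
        ccomp C (frho F g) (fEm F f g h k) = ccomp C k (frho F f)) \<and>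
     (\<forall>f \<in> cAr C. fEm F f f (cid C (cdom C f)) (cid C (ccod C f)) = cid C (fE F f)) \<and>
     (\<forall>f g l h k h' k'. is_sq C f g h k \<longrightarrow> is_sq C g l h' k' \<longrightarrow>
        fEm F f l (ccomp C h' h) (ccomp C k' k) = ccomp C (fEm F g l h' k') (fEm F f g h k))"

text \<open>Morphisms of Ff_C: natural transformations alpha : E \<Rightarrow> E' with alpha lambda = lambda',
  rho' alpha = rho.  Only the components at arrows of C matter.\<close>
definition is_ff_hom :: "('o, 'm) cat \<Rightarrow> ('o, 'm) ff \<Rightarrow> ('o, 'm) ff \<Rightarrow> ('m \<Rightarrow> 'm) \<Rightarrow> bool" where
  "is_ff_hom C F G \<alpha> \<longleftrightarrow>
     (\<forall>f \<in> cAr C. \<alpha> f \<in> chom C (fE F f) (fE G f) \<and>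
        ccomp C (\<alpha> f) (flam F f) = flam G f \<and>
        ccomp C (frho G f) (\<alpha> f) = frho F f) \<and>
     (\<forall>f g h k. is_sq C f g h k \<longrightarrow>
        ccomp C (\<alpha> g) (fEm F f g h k) = ccomp C (fEm G f g h k) (\<alpha> f))"

definition ff_id :: "('o, 'm) cat \<Rightarrow> ('o, 'm) ff \<Rightarrow> 'm \<Rightarrow> 'm" where
  "ff_id C F = (\<lambda>f. cid C (fE F f))"

definition ff_comp :: "('o, 'm) cat \<Rightarrow> ('m \<Rightarrow> 'm) \<Rightarrow> ('m \<Rightarrow> 'm) \<Rightarrow> 'm \<Rightarrow> 'm" where
  "ff_comp C \<beta> \<alpha> = (\<lambda>f. ccomp C (\<beta> f) (\<alpha> f))"

definition ff_eq :: "('o, 'm) cat \<Rightarrow> ('m \<Rightarrow> 'm) \<Rightarrow> ('m \<Rightarrow> 'm) \<Rightarrow> bool" where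
  "ff_eq C \<alpha> \<beta> \<longleftrightarrow> (\<forall>f \<in> cAr C. \<alpha> f = \<beta> f)"

text \<open>ff_tens C F' F = F' \<otimes> F: f = rho'_{rho_f} \<circ> (lambda'_{rho_f} \<circ> lambda_f).\<close>
definition ff_tens :: "('o, 'm) cat \<Rightarrow> ('o, 'm) ff \<Rightarrow> ('o, 'm) ff \<Rightarrow> ('o, 'm) ff" where
  "ff_tens C F' F =
     \<lparr> fE = (\<lambda>f. fE F' (frho F f)),
       fEm = (\<lambda>f g h k. fEm F' (frho F f) (frho F g) (fEm F f g h k) k),
       flam = (\<lambda>f. ccomp C (flam F' (frho F f)) (flam F f)),
       frho = (\<lambda>f. frho F' (frho F f)) \<rparr>"

definition ff_I :: "('o, 'm) cat \<Rightarrow> ('o, 'm) ff" where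
  "ff_I C = \<lparr> fE = cdom C, fEm = (\<lambda>f g h k. h), flam = (\<lambda>f. cid C (cdom C f)), frho = (\<lambda>f. f) \<rparr>"

text \<open>ff_odot C F' F = F' \<odot> F: f = (rho_f \<circ> rho'_{lambda_f}) \<circ> lambda'_{lambda_f}.\<close>
definition ff_odot :: "('o, 'm) cat \<Rightarrow> ('o, 'm) ff \<Rightarrow> ('o, 'm) ff \<Rightarrow> ('o, 'm) ff" where
  "ff_odot C F' F =
     \<lparr> fE = (\<lambda>f. fE F' (flam F f)),
       fEm = (\<lambda>f g h k. fEm F' (flam F f) (flam F g) h (fEm F f g h k)),
       flam = (\<lambda>f. flam F' (flam F f)),
       frho = (\<lambda>f. ccomp C (frho F f) (frho F' (flam F f))) \<rparr>"

definition ff_bot :: "('o, 'm) cat \<Rightarrow> ('o, 'm) ff" where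
  "ff_bot C = \<lparr> fE = ccod C, fEm = (\<lambda>f g h k. k), flam = (\<lambda>f. f), frho = (\<lambda>f. cid C (ccod C f)) \<rparr>"

text \<open>For beta : E' \<rightarrow> F' and alpha : E \<rightarrow> F (with F = (F,mu,nu)):
  (beta \<otimes> alpha)_f = beta_{nu_f} \<circ> E'(alpha_f, 1_Y),
  (beta \<odot> alpha)_f = beta_{mu_f} \<circ> E'(1_X, alpha_f).\<close>
definition ff_tens_m :: "('o, 'm) cat \<Rightarrow> ('o, 'm) ff \<Rightarrow> ('o, 'm) ff \<Rightarrow> ('o, 'm) ff \<Rightarrow>
    ('m \<Rightarrow> 'm) \<Rightarrow> ('m \<Rightarrow> 'm) \<Rightarrow> 'm \<Rightarrow> 'm" where
  "ff_tens_m C E' E F \<beta> \<alpha> =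
     (\<lambda>f. ccomp C (\<beta> (frho F f)) (fEm E' (frho E f) (frho F f) (\<alpha> f) (cid C (ccod C f))))"

definition ff_odot_m :: "('o, 'm) cat \<Rightarrow> ('o, 'm) ff \<Rightarrow> ('o, 'm) ff \<Rightarrow> ('o, 'm) ff \<Rightarrow>
    ('m \<Rightarrow> 'm) \<Rightarrow> ('m \<Rightarrow> 'm) \<Rightarrow> 'm \<Rightarrow> 'm" where
  "ff_odot_m C E' E F \<beta> \<alpha> =
     (\<lambda>f. ccomp C (\<beta> (flam F f)) (fEm E' (flam E f) (flam F f) (cid C (cdom C f)) (\<alpha> f)))"

text \<open>(bot, j, m) is a \<otimes>-monoid (using I \<otimes> bot = bot = bot \<otimes> I strictly).\<close>
definition tens_monoid :: "('o, 'm) cat \<Rightarrow> ('m \<Rightarrow> 'm) \<Rightarrow> ('m \<Rightarrow> 'm) \<Rightarrow> bool" where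
  "tens_monoid C j m \<longleftrightarrow>
    (let B = ff_bot C; I = ff_I C; BB = ff_tens C B B in
     is_ff_hom C I B j \<and> is_ff_hom C BB B m \<and>
     ff_eq C (ff_comp C m (ff_tens_m C BB B B m (ff_id C B)))
             (ff_comp C m (ff_tens_m C B BB B (ff_id C B) m)) \<and>
     ff_eq C (ff_comp C m (ff_tens_m C I B B j (ff_id C B))) (ff_id C B) \<and>
     ff_eq C (ff_comp C m (ff_tens_m C B I B (ff_id C B) j)) (ff_id C B))"

text \<open>(I, j, c) is a \<odot>-comonoid (using I \<odot> bot = I = bot \<odot> I strictly).\<close>
definition odot_comonoid :: "('o, 'm) cat \<Rightarrow> ('m \<Rightarrow> 'm) \<Rightarrow> ('m \<Rightarrow> 'm) \<Rightarrow> bool" where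
  "odot_comonoid C j c \<longleftrightarrow>
    (let B = ff_bot C; I = ff_I C; II = ff_odot C I I in
     is_ff_hom C I B j \<and> is_ff_hom C I II c \<and>
     ff_eq C (ff_comp C (ff_odot_m C I I I c (ff_id C I)) c)
             (ff_comp C (ff_odot_m C I I II (ff_id C I) c) c) \<and>
     ff_eq C (ff_comp C (ff_odot_m C I I I j (ff_id C I)) c) (ff_id C I) \<and>
     ff_eq C (ff_comp C (ff_odot_m C I I B (ff_id C I) j) c) (ff_id C I))"

definition z_typed :: "('o, 'm) cat \<Rightarrow>
    (('o, 'm) ff \<Rightarrow> ('o, 'm) ff \<Rightarrow> ('o, 'm) ff \<Rightarrow> ('o, 'm) ff \<Rightarrow> 'm \<Rightarrow> 'm) \<Rightarrow> bool" where
  "z_typed C z \<longleftrightarrow>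
    (\<forall>A B X Y. is_ff C A \<longrightarrow> is_ff C B \<longrightarrow> is_ff C X \<longrightarrow> is_ff C Y \<longrightarrow>
       is_ff_hom C (ff_tens C (ff_odot C A B) (ff_odot C X Y))
                   (ff_odot C (ff_tens C A X) (ff_tens C B Y)) (z A B X Y))"

definition z_natural :: "('o, 'm) cat \<Rightarrow>
    (('o, 'm) ff \<Rightarrow> ('o, 'm) ff \<Rightarrow> ('o, 'm) ff \<Rightarrow> ('o, 'm) ff \<Rightarrow> 'm \<Rightarrow> 'm) \<Rightarrow> bool" where
  "z_natural C z \<longleftrightarrow>
    (\<forall>A B X Y A' B' X' Y' a b x y.
       is_ff C A \<longrightarrow> is_ff C B \<longrightarrow> is_ff C X \<longrightarrow> is_ff C Y \<longrightarrow>
       is_ff C A' \<longrightarrow> is_ff C B' \<longrightarrow> is_ff C X' \<longrightarrow> is_ff C Y' \<longrightarrow>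
       is_ff_hom C A A' a \<longrightarrow> is_ff_hom C B B' b \<longrightarrow>
       is_ff_hom C X X' x \<longrightarrow> is_ff_hom C Y Y' y \<longrightarrow>
       ff_eq C
         (ff_comp C (ff_odot_m C (ff_tens C A X) (ff_tens C B Y) (ff_tens C B' Y')
                       (ff_tens_m C A X X' a x) (ff_tens_m C B Y Y' b y))
                    (z A B X Y))
         (ff_comp C (z A' B' X' Y')
                    (ff_tens_m C (ff_odot C A B) (ff_odot C X Y) (ff_odot C X' Y')
                       (ff_odot_m C A B B' a b) (ff_odot_m C X Y Y' x y))))"

definition z_coherent :: "('o, 'm) cat \<Rightarrow> ('m \<Rightarrow> 'm) \<Rightarrow> ('m \<Rightarrow> 'm) \<Rightarrow>
    (('o, 'm) ff \<Rightarrow> ('o, 'm) ff \<Rightarrow> ('o, 'm) ff \<Rightarrow> ('o, 'm) ff \<Rightarrow> 'm \<Rightarrow> 'm) \<Rightarrow> bool" where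
  "z_coherent C m c z \<longleftrightarrow>
    (let I = ff_I C; Bt = ff_bot C;
         tn = ff_tens C; od = ff_odot C; tm = ff_tens_m C; om = ff_odot_m C; idm = ff_id C;
         cmp = ff_comp C in
    \<comment> \<open>(A\<odot>B\<odot>C)\<otimes>(A'\<odot>B'\<odot>C') \<rightarrow> (A\<otimes>A')\<odot>(B\<otimes>B')\<odot>(C\<otimes>C')\<close>
    (\<forall>A B D A' B' D'. is_ff C A \<longrightarrow> is_ff C B \<longrightarrow> is_ff C D \<longrightarrow>
        is_ff C A' \<longrightarrow> is_ff C B' \<longrightarrow> is_ff C D' \<longrightarrow>
      ff_eq C
        (cmp (om (tn (od A B) (od A' B')) (tn D D') (tn D D') (z A B A' B') (idm (tn D D')))
             (z (od A B) D (od A' B') D'))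
        (cmp (om (tn A A') (tn (od B D) (od B' D')) (od (tn B B') (tn D D'))
                 (idm (tn A A')) (z B D B' D'))
             (z A (od B D) A' (od B' D')))) \<and>
    \<comment> \<open>(A\<odot>A')\<otimes>(B\<odot>B')\<otimes>(C\<odot>C') \<rightarrow> (A\<otimes>B\<otimes>C)\<odot>(A'\<otimes>B'\<otimes>C')\<close>
    (\<forall>A B D A' B' D'. is_ff C A \<longrightarrow> is_ff C B \<longrightarrow> is_ff C D \<longrightarrow>
        is_ff C A' \<longrightarrow> is_ff C B' \<longrightarrow> is_ff C D' \<longrightarrow>
      ff_eq C
        (cmp (z (tn A B) (tn A' B') D D')
             (tm (tn (od A A') (od B B')) (od D D') (od D D') (z A A' B B') (idm (od D D'))))
        (cmp (z A A' (tn B D) (tn B' D'))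
             (tm (od A A') (tn (od B B') (od D D')) (od (tn B D) (tn B' D'))
                 (idm (od A A')) (z B B' D D')))) \<and>
    \<comment> \<open>(A\<odot>B)\<otimes>I \<rightarrow> (A\<otimes>I)\<odot>(B\<otimes>I)\<close>
    (\<forall>A B. is_ff C A \<longrightarrow> is_ff C B \<longrightarrow>
      ff_eq C (cmp (z A B I I) (tm (od A B) I (od I I) (idm (od A B)) c))
              (idm (tn (od A B) I))) \<and>
    \<comment> \<open>I\<otimes>(A\<odot>B) \<rightarrow> (I\<otimes>A)\<odot>(I\<otimes>B)\<close>
    (\<forall>A B. is_ff C A \<longrightarrow> is_ff C B \<longrightarrow>
      ff_eq C (cmp (z I I A B) (tm I (od A B) (od A B) c (idm (od A B))))
              (idm (tn I (od A B)))) \<and>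
    \<comment> \<open>(\<bottom>\<odot>A)\<otimes>(\<bottom>\<odot>B) \<rightarrow> \<bottom>\<odot>(A\<otimes>B)\<close>
    (\<forall>A B. is_ff C A \<longrightarrow> is_ff C B \<longrightarrow>
      ff_eq C (cmp (om (tn Bt Bt) (tn A B) (tn A B) m (idm (tn A B))) (z Bt A Bt B))
              (idm (tn (od Bt A) (od Bt B)))) \<and>
    \<comment> \<open>(A\<odot>\<bottom>)\<otimes>(B\<odot>\<bottom>) \<rightarrow> (A\<otimes>B)\<odot>\<bottom>\<close>
    (\<forall>A B. is_ff C A \<longrightarrow> is_ff C B \<longrightarrow>
      ff_eq C (cmp (om (tn A B) (tn Bt Bt) Bt (idm (tn A B)) m) (z A Bt B Bt))
              (idm (tn (od A Bt) (od B Bt)))))"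

end

theory Submission
  imports Defs
begin

text \<open>All structure maps are identities or instances of the functorial actions \<open>E(h, k)\<close>:
  \<open>\<bottom> \<otimes> \<bottom>\<close> and \<open>I \<odot> I\<close> factor \<open>f\<close> through its codomain and domain, so \<open>m\<close> and \<open>c\<close> are
  identities, \<open>j\<^sub>f = f\<close>, and \<open>z\<close> is \<open>E\<^sub>A\<close> applied to a canonical square.  Evaluated at an
  arrow \<open>f\<close>, every axiom becomes an equation between composites of \<open>\<lambda>\<close>'s, \<open>\<rho>\<close>'s and
  \<open>E(h, k)\<close>'s, which follows from \<open>\<rho>\<^sub>f \<lambda>\<^sub>f = f\<close>, naturality of \<open>\<lambda>\<close> and \<open>\<rho>\<close> and functoriality of
  the \<open>E\<close>'s.  For naturality of \<open>z\<close> functoriality collapses both sides to the two legs of one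
  naturality square of \<open>a\<close>.\<close>

definition opaque :: "'a \<Rightarrow> 'a" where
  "opaque x = x"

locale category =
  fixes C :: "('o, 'm) cat"
  assumes is_category: "is_category C"
begin

abbreviation arr :: "'m \<Rightarrow> bool" where "arr f \<equiv> f \<in> cAr C"
abbreviation dm :: "'m \<Rightarrow> 'o" where "dm \<equiv> cdom C"
abbreviation cd :: "'m \<Rightarrow> 'o" where "cd \<equiv> ccod C"
abbreviation ide :: "'o \<Rightarrow> 'm" where "ide \<equiv> cid C"
abbreviation cmp :: "'m \<Rightarrow> 'm \<Rightarrow> 'm" (infixr "\<cdot>" 55) where "g \<cdot> f \<equiv> ccomp C g f"

lemma dom_obj: "arr f \<Longrightarrow> dm f \<in> cOb C"
  and cod_obj: "arr f \<Longrightarrow> cd f \<in> cOb C"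
  and arr_ide: "a \<in> cOb C \<Longrightarrow> arr (ide a)"
  and dom_ide: "a \<in> cOb C \<Longrightarrow> dm (ide a) = a"
  and cod_ide: "a \<in> cOb C \<Longrightarrow> cd (ide a) = a"
  and arr_comp: "arr f \<Longrightarrow> arr g \<Longrightarrow> cd f = dm g \<Longrightarrow> arr (g \<cdot> f)"
  and dom_comp: "arr f \<Longrightarrow> arr g \<Longrightarrow> cd f = dm g \<Longrightarrow> dm (g \<cdot> f) = dm f"
  and cod_comp: "arr f \<Longrightarrow> arr g \<Longrightarrow> cd f = dm g \<Longrightarrow> cd (g \<cdot> f) = cd g"
  using is_category unfolding is_category_def chom_def by blast+

lemma comp_ide_right [simp]: "arr f \<Longrightarrow> dm f = a \<Longrightarrow> f \<cdot> ide a = f"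
  and comp_ide_left [simp]: "arr f \<Longrightarrow> cd f = a \<Longrightarrow> ide a \<cdot> f = f"
  using is_category unfolding is_category_def by blast+

lemma comp_assoc [simp]:
  "arr f \<Longrightarrow> arr g \<Longrightarrow> arr h \<Longrightarrow> cd f = dm g \<Longrightarrow> cd g = dm h \<Longrightarrow> (h \<cdot> g) \<cdot> f = h \<cdot> (g \<cdot> f)"
  using is_category unfolding is_category_def by metis

lemma comp_reassoc:
  assumes "g \<cdot> f = e" "arr x" "arr f" "arr g" "cd x = dm f" "cd f = dm g"
  shows "g \<cdot> (f \<cdot> x) = e \<cdot> x"
  using comp_assoc[OF assms(2-6)] assms(1) by metis

lemma is_sq_iff [simp]:
  "is_sq C f g h k \<longleftrightarrow> arr f \<and> arr g \<and> arr h \<and> arr k \<and> dm h = dm f \<and> cd h = dm g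
     \<and> dm k = cd f \<and> cd k = cd g \<and> g \<cdot> h = k \<cdot> f"
  unfolding is_sq_def chom_def by blast

text \<open>The simplifier discharges typing side conditions by evaluating \<open>typing\<close>, which packs
  \<open>arr\<close>, \<open>dm\<close> and \<open>cd\<close> into one value computed bottom-up on composite arrows.  The \<open>None\<close>
  branches of the rules below hold an \<open>opaque\<close> copy of the left-hand side, so that they cannot loop.\<close>

definition typing :: "'m \<Rightarrow> ('o \<times> 'o) option" where
  "typing f = (if arr f then Some (dm f, cd f) else None)"

lemma arr_typingE:
  assumes "arr f"
  obtains a b where "typing f = Some (a, b)" "a \<in> cOb C" "b \<in> cOb C"
  using that[of "dm f" "cd f"] assms by (simp add: typing_def dom_obj cod_obj)

lemma is_sqE:
  assumes "is_sq C f g h k"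
  obtains a b a' b' where "typing f = Some (a, b)" "typing g = Some (a', b')"
    "typing h = Some (a, a')" "typing k = Some (b, b')" "g \<cdot> h = k \<cdot> f"
    "a \<in> cOb C" "b \<in> cOb C" "a' \<in> cOb C" "b' \<in> cOb C"
  using that[of "dm f" "cd f" "dm g" "cd g"] assms by (simp add: typing_def dom_obj cod_obj)

lemma typing_comp:
  "typing (g \<cdot> f) = (case (typing f, typing g) of
     (Some (a, b), Some (b', c)) \<Rightarrow> if b = b' then Some (a, c) else opaque typing (g \<cdot> f)
   | _ \<Rightarrow> opaque typing (g \<cdot> f))"
  by (auto simp: typing_def opaque_def arr_comp dom_comp cod_comp split: option.split)

lemma typing_ide: "typing (ide a) = (if a \<in> cOb C then Some (a, a) else opaque typing (ide a))"
  by (simp add: typing_def opaque_def arr_ide dom_ide cod_ide)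

lemma arr_iff_typing: "arr f \<longleftrightarrow> typing f \<noteq> None"
  and dom_typing: "dm f = (case typing f of None \<Rightarrow> opaque dm f | Some (a, b) \<Rightarrow> a)"
  and cod_typing: "cd f = (case typing f of None \<Rightarrow> opaque cd f | Some (a, b) \<Rightarrow> b)"
  by (simp_all add: typing_def opaque_def)

lemmas typing_simps = typing_comp typing_ide arr_iff_typing dom_typing cod_typing

context
  fixes F :: "('o, 'm) ff"
  assumes F: "is_ff C F"
begin

lemma obj_fE: "arr f \<Longrightarrow> fE F f \<in> cOb C"
  and arr_lam: "arr f \<Longrightarrow> arr (flam F f)"
  and dom_lam: "arr f \<Longrightarrow> dm (flam F f) = dm f"
  and cod_lam: "arr f \<Longrightarrow> cd (flam F f) = fE F f"
  and arr_rho: "arr f \<Longrightarrow> arr (frho F f)"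
  and dom_rho: "arr f \<Longrightarrow> dm (frho F f) = fE F f"
  and cod_rho: "arr f \<Longrightarrow> cd (frho F f) = cd f"
  and rho_lam: "arr f \<Longrightarrow> frho F f \<cdot> flam F f = f"
  using F unfolding is_ff_def chom_def by blast+

lemma arr_Em: "is_sq C f g h k \<Longrightarrow> arr (fEm F f g h k)"
  and dom_Em: "is_sq C f g h k \<Longrightarrow> dm (fEm F f g h k) = fE F f"
  and cod_Em: "is_sq C f g h k \<Longrightarrow> cd (fEm F f g h k) = fE F g"
  and Em_lam: "is_sq C f g h k \<Longrightarrow> fEm F f g h k \<cdot> flam F f = flam F g \<cdot> h"
  and rho_Em: "is_sq C f g h k \<Longrightarrow> frho F g \<cdot> fEm F f g h k = k \<cdot> frho F f"
  using F unfolding is_ff_def chom_def by blast+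

lemma Em_ide: "arr f \<Longrightarrow> a = dm f \<Longrightarrow> b = cd f \<Longrightarrow> fEm F f f (ide a) (ide b) = ide (fE F f)"
  using F unfolding is_ff_def by blast

lemma Em_comp:
  "is_sq C f g h k \<Longrightarrow> is_sq C g l h' k' \<Longrightarrow>
   fEm F g l h' k' \<cdot> fEm F f g h k = fEm F f l (h' \<cdot> h) (k' \<cdot> k)"
  using F unfolding is_ff_def by metis

lemma typing_lam:
  "typing (flam F f) = (case typing f of None \<Rightarrow> opaque typing (flam F f) | Some (a, b) \<Rightarrow> Some (a, fE F f))"
  by (auto simp: typing_def opaque_def arr_lam dom_lam cod_lam split: option.split)

lemma typing_rho:
  "typing (frho F f) = (case typing f of None \<Rightarrow> opaque typing (frho F f) | Some (a, b) \<Rightarrow> Some (fE F f, b))"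
  by (auto simp: typing_def opaque_def arr_rho dom_rho cod_rho split: option.split)

lemma typing_Em:
  "typing (fEm F f g h k) = (if is_sq C f g h k then Some (fE F f, fE F g) else opaque typing (fEm F f g h k))"
  by (simp add: typing_def opaque_def arr_Em dom_Em cod_Em del: is_sq_iff)

lemma rho_lam_assoc: "arr f \<Longrightarrow> arr x \<Longrightarrow> cd x = dm f \<Longrightarrow> frho F f \<cdot> (flam F f \<cdot> x) = f \<cdot> x"
  by (rule comp_reassoc) (simp_all add: rho_lam arr_lam dom_lam cod_lam arr_rho dom_rho)

lemma Em_lam_assoc:
  "is_sq C f g h k \<Longrightarrow> arr x \<Longrightarrow> cd x = dm f \<Longrightarrow>
   fEm F f g h k \<cdot> (flam F f \<cdot> x) = flam F g \<cdot> (h \<cdot> x)"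
  by (subst comp_reassoc[where e = "flam F g \<cdot> h"])
    (simp_all add: Em_lam arr_lam dom_lam cod_lam arr_Em dom_Em arr_comp dom_comp cod_comp)

lemma rho_Em_assoc:
  "is_sq C f g h k \<Longrightarrow> arr x \<Longrightarrow> cd x = fE F f \<Longrightarrow>
   frho F g \<cdot> (fEm F f g h k \<cdot> x) = k \<cdot> (frho F f \<cdot> x)"
  by (subst comp_reassoc[where e = "k \<cdot> frho F f"])
    (simp_all add: rho_Em arr_rho dom_rho cod_rho arr_Em dom_Em cod_Em arr_comp dom_comp cod_comp)

lemma Em_comp_assoc:
  "is_sq C f g h k \<Longrightarrow> is_sq C g l h' k' \<Longrightarrow> arr x \<Longrightarrow> cd x = fE F f \<Longrightarrow>
   fEm F g l h' k' \<cdot> (fEm F f g h k \<cdot> x) = fEm F f l (h' \<cdot> h) (k' \<cdot> k) \<cdot> x"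
  by (rule comp_reassoc) (simp_all add: Em_comp arr_Em dom_Em cod_Em del: is_sq_iff)

end

context
  fixes F G :: "('o, 'm) ff" and \<alpha> :: "'m \<Rightarrow> 'm"
  assumes F: "is_ff C F" and G: "is_ff C G" and \<alpha>: "is_ff_hom C F G \<alpha>"
begin

lemma arr_hom: "arr f \<Longrightarrow> arr (\<alpha> f)"
  and dom_hom: "arr f \<Longrightarrow> dm (\<alpha> f) = fE F f"
  and cod_hom: "arr f \<Longrightarrow> cd (\<alpha> f) = fE G f"
  and hom_lam: "arr f \<Longrightarrow> \<alpha> f \<cdot> flam F f = flam G f"
  and hom_rho: "arr f \<Longrightarrow> frho G f \<cdot> \<alpha> f = frho F f"
  using \<alpha> unfolding is_ff_hom_def chom_def by blast+

lemma hom_natural: "is_sq C f g h k \<Longrightarrow> \<alpha> g \<cdot> fEm F f g h k = fEm G f g h k \<cdot> \<alpha> f"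
  using \<alpha> unfolding is_ff_hom_def by blast

lemma typing_hom:
  "typing (\<alpha> f) = (case typing f of None \<Rightarrow> opaque typing (\<alpha> f) | Some _ \<Rightarrow> Some (fE F f, fE G f))"
  by (auto simp: typing_def opaque_def arr_hom dom_hom cod_hom split: option.split)

lemma hom_lam_assoc: "arr f \<Longrightarrow> arr x \<Longrightarrow> cd x = dm f \<Longrightarrow> \<alpha> f \<cdot> (flam F f \<cdot> x) = flam G f \<cdot> x"
  by (rule comp_reassoc) (simp_all add: F hom_lam arr_lam dom_lam cod_lam arr_hom dom_hom)

lemma hom_rho_assoc: "arr f \<Longrightarrow> arr x \<Longrightarrow> cd x = fE F f \<Longrightarrow> frho G f \<cdot> (\<alpha> f \<cdot> x) = frho F f \<cdot> x"
  by (rule comp_reassoc) (simp_all add: G hom_rho arr_rho dom_rho arr_hom dom_hom cod_hom)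

lemma hom_natural_assoc:
  "is_sq C f g h k \<Longrightarrow> arr x \<Longrightarrow> cd x = fE F f \<Longrightarrow>
   \<alpha> g \<cdot> (fEm F f g h k \<cdot> x) = fEm G f g h k \<cdot> (\<alpha> f \<cdot> x)"
  by (subst comp_reassoc[where e = "fEm G f g h k \<cdot> \<alpha> f"])
    (simp_all add: F G hom_natural arr_Em dom_Em cod_Em arr_hom dom_hom cod_hom arr_comp dom_comp cod_comp)

lemmas hom_simps = typing_hom hom_lam hom_rho hom_natural hom_lam_assoc hom_rho_assoc hom_natural_assoc

end

lemmas ff_simps = obj_fE typing_lam typing_rho typing_Em rho_lam Em_lam rho_Em Em_ide Em_comp
  rho_lam_assoc Em_lam_assoc rho_Em_assoc Em_comp_assoc

declare typing_simps [simp] ff_simps [simp]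

end

text \<open>\<open>(A \<odot> B) \<otimes> (X \<odot> Y)\<close> factors \<open>f\<close> through \<open>E\<^sub>A u\<close> and \<open>(A \<otimes> X) \<odot> (B \<otimes> Y)\<close> through \<open>E\<^sub>A v\<close>,
  where \<open>u = \<lambda>\<^sub>B (r \<cdot> s)\<close> and \<open>v = \<rho>\<^sub>X (\<lambda>\<^sub>B r \<cdot> y)\<close> for \<open>y = \<lambda>\<^sub>Y f\<close>, \<open>r = \<rho>\<^sub>Y f\<close>, \<open>s = \<rho>\<^sub>X y\<close>;
  the interchange map is \<open>E\<^sub>A\<close> applied to the square from \<open>u\<close> to \<open>v\<close> whose sides are
  \<open>E\<^sub>X(1, \<lambda>\<^sub>B r)\<close> and \<open>E\<^sub>B(s, 1)\<close>.\<close>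

definition ff_interchange ::
    "('o, 'm) cat \<Rightarrow> ('o, 'm) ff \<Rightarrow> ('o, 'm) ff \<Rightarrow> ('o, 'm) ff \<Rightarrow> ('o, 'm) ff \<Rightarrow> 'm \<Rightarrow> 'm" where
  "ff_interchange C A B X Y = (\<lambda>f.
     let y = flam Y f; r = frho Y f; s = frho X y; w = ccomp C (flam B r) y in
     fEm A (flam B (ccomp C r s)) (frho X w)
       (fEm X y w (cid C (cdom C f)) (flam B r))
       (fEm B (ccomp C r s) r s (cid C (ccod C f))))"

lemmas ff_operation_defs = ff_tens_def ff_odot_def ff_I_def ff_bot_def ff_tens_m_def ff_odot_m_def
  ff_id_def ff_comp_def ff_eq_def Let_def

context category
begin

lemma ff_hom_bot_tens_bot: "is_ff_hom C (ff_tens C (ff_bot C) (ff_bot C)) (ff_bot C) (\<lambda>f. ide (cd f))"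
  unfolding is_ff_hom_def chom_def
  by (intro conjI ballI allI impI; (erule arr_typingE | erule is_sqE); simp add: ff_operation_defs)

lemma ff_hom_I_odot_I: "is_ff_hom C (ff_I C) (ff_odot C (ff_I C) (ff_I C)) (\<lambda>f. ide (dm f))"
  unfolding is_ff_hom_def chom_def
  by (intro conjI ballI allI impI; (erule arr_typingE | erule is_sqE); simp add: ff_operation_defs)

lemma ff_hom_I_bot: "is_ff_hom C (ff_I C) (ff_bot C) (\<lambda>f. f)"
  unfolding is_ff_hom_def chom_def
  by (intro conjI ballI allI impI; (erule arr_typingE | erule is_sqE); simp add: ff_operation_defs)

lemma tens_monoid_bot: "tens_monoid C (\<lambda>f. f) (\<lambda>f. ide (cd f))"
  unfolding tens_monoid_def Let_def ff_eq_def
  by (intro conjI ballI ff_hom_bot_tens_bot ff_hom_I_bot; erule arr_typingE; simp add: ff_operation_defs)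

lemma odot_comonoid_I: "odot_comonoid C (\<lambda>f. f) (\<lambda>f. ide (dm f))"
  unfolding odot_comonoid_def Let_def ff_eq_def
  by (intro conjI ballI ff_hom_I_odot_I ff_hom_I_bot; erule arr_typingE; simp add: ff_operation_defs)

lemma z_typed_interchange: "z_typed C (ff_interchange C)"
  unfolding z_typed_def is_ff_hom_def chom_def
  by (intro allI impI conjI ballI; (erule arr_typingE | erule is_sqE);
      simp add: ff_operation_defs ff_interchange_def)

lemma ff_interchange_natural_at:
  assumes A: "is_ff C A" and B: "is_ff C B" and X: "is_ff C X" and Y: "is_ff C Y"
    and A': "is_ff C A'" and B': "is_ff C B'" and X': "is_ff C X'" and Y': "is_ff C Y'"
    and a: "is_ff_hom C A A' a" and b: "is_ff_hom C B B' b"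
    and x: "is_ff_hom C X X' x" and y: "is_ff_hom C Y Y' y"
    and f: "typing f = Some (P, Q)" "P \<in> cOb C" "Q \<in> cOb C"
  shows "ff_comp C (ff_odot_m C (ff_tens C A X) (ff_tens C B Y) (ff_tens C B' Y')
                      (ff_tens_m C A X X' a x) (ff_tens_m C B Y Y' b y))
                   (ff_interchange C A B X Y) f =
         ff_comp C (ff_interchange C A' B' X' Y')
                   (ff_tens_m C (ff_odot C A B) (ff_odot C X Y) (ff_odot C X' Y')
                      (ff_odot_m C A B B' a b) (ff_odot_m C X Y Y' x y)) f"
proof -
  define g where "g = frho Y f \<cdot> frho X (flam Y f)"
  define w' where "w' = flam B' (frho Y' f) \<cdot> flam Y' f"
  define H where "H = fEm X' (flam Y f) w' (ide P) (flam B' (frho Y' f) \<cdot> y f) \<cdot> x (flam Y f)"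
  define K where "K = fEm B' g (frho Y' f) (y f \<cdot> frho X (flam Y f)) (ide Q) \<cdot> b g"
  note simps = A B X Y A' B' X' Y' f hom_simps[OF A A' a] hom_simps[OF B B' b]
    hom_simps[OF X X' x] hom_simps[OF Y Y' y]
  have "ff_comp C (ff_odot_m C (ff_tens C A X) (ff_tens C B Y) (ff_tens C B' Y')
                      (ff_tens_m C A X X' a x) (ff_tens_m C B Y Y' b y))
                   (ff_interchange C A B X Y) f = a (frho X' w') \<cdot> fEm A (flam B g) (frho X' w') H K"
    using simps unfolding g_def w'_def H_def K_def
    by (simp only: ff_operation_defs ff_interchange_def) simp
  also have "\<dots> = fEm A' (flam B g) (frho X' w') H K \<cdot> a (flam B g)"
    using simps unfolding g_def w'_def H_def K_def by (intro hom_natural[OF A A' a]) simp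
  also have "\<dots> = ff_comp C (ff_interchange C A' B' X' Y')
                   (ff_tens_m C (ff_odot C A B) (ff_odot C X Y) (ff_odot C X' Y')
                      (ff_odot_m C A B B' a b) (ff_odot_m C X Y Y' x y)) f"
    using simps unfolding g_def w'_def H_def K_def
    by (simp only: ff_operation_defs ff_interchange_def) simp
  finally show ?thesis .
qed

lemma z_natural_interchange: "z_natural C (ff_interchange C)"
  unfolding z_natural_def ff_eq_def
  by (intro allI impI ballI, erule arr_typingE) (rule ff_interchange_natural_at)

lemma z_coherent_interchange:
  "z_coherent C (\<lambda>f. ide (cd f)) (\<lambda>f. ide (dm f)) (ff_interchange C)"
  unfolding z_coherent_def Let_def ff_eq_def
  by (intro conjI allI impI ballI; erule arr_typingE;
      simp only: ff_operation_defs ff_interchange_def; simp)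

end

theorem proposition3p6:
  fixes C :: "('o, 'm) cat"
  assumes "is_category C"
  shows "\<exists>m c j z.
           is_ff_hom C (ff_tens C (ff_bot C) (ff_bot C)) (ff_bot C) m \<and>
           is_ff_hom C (ff_I C) (ff_odot C (ff_I C) (ff_I C)) c \<and>
           is_ff_hom C (ff_I C) (ff_bot C) j \<and>
           tens_monoid C j m \<and> odot_comonoid C j c \<and>
           z_typed C z \<and> z_natural C z \<and> z_coherent C m c z"
proof -
  interpret category C by (rule category.intro) (rule assms)
  show ?thesis
    by (intro exI[of _ "\<lambda>f. cid C (ccod C f)"] exI[of _ "\<lambda>f. cid C (cdom C f)"] exI[of _ "\<lambda>f. f"]
        exI[of _ "ff_interchange C"] conjI ff_hom_bot_tens_bot ff_hom_I_odot_I ff_hom_I_bot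
        tens_monoid_bot odot_comonoid_I z_typed_interchange z_natural_interchange z_coherent_interchange)
qed

end
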